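(* Let $G$ and $H$ be finite abelian groups, written additively, of the same even order $k>2$, let $f:G\to H$ be semi-planar, and suppose $S(G,H;f)$ splits into two substructures $S_1$ and $S_2$ with $\mathcal{L}(0,0)\in S_1$. For $a\in G$ let $P_a^1=\{b\in H : \mathcal{L}(a,b)\in S_1\}$. Then the set $A=\{a\in G : P_0^1=P_a^1\}$ is either a subgroup of $G$ of index $2$, or $A=G$.
   Context: A function $f:G\to H$ is semi-planar if for every non-identity $a\in G$ and every $y\in H$, the equation $f(x+a)-f(x)=y$ has either $0$ or $2$ solutions $x\in G$. The incidence structure $S(G,H;f)$ has points $(x,y)\in G\times H$ and lines $\mathcal{L}(a,b)$ for $(a,b)\in G\times H$, with $(x,y)$ incident with $\mathcal{L}(a,b)$ iff $y=f(x-a)+b$. Its incidence graph is the bipartite graph on points and lines with an edge for each incident pair. $S(G,H;f)$ splits into two substructures $S_1,S_2$ if its incidence graph has exactly two connected components; $S_1,S_2$ are the incidence structures formed by the points and lines of the two components, and $\mathcal{L}(a,b)\in S_i$ means the line lies in component $S_i$. *)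

theory Defs
  imports Main
begin

definition semi_planar :: "('g::{ab_group_add,finite} \<Rightarrow> 'h::ab_group_add) \<Rightarrow> bool" where
  "semi_planar f \<longleftrightarrow>
     (\<forall>a. a \<noteq> 0 \<longrightarrow> (\<forall>y. card {x. f (x + a) - f x = y} \<in> {0, 2}))"

text \<open>Incidence graph of S(G,H;f): vertices are points Inl (x,y) and lines Inr (a,b);
  (x,y) is incident with L(a,b) iff y = f(x-a)+b. Edges are undirected.\<close>
definition incidence_edges ::
  "('g::ab_group_add \<Rightarrow> 'h::ab_group_add) \<Rightarrow> ((('g \<times> 'h) + ('g \<times> 'h)) \<times> (('g \<times> 'h) + ('g \<times> 'h))) set" where
  "incidence_edges f =
     {(Inl (x, y), Inr (a, b)) | x y a b. y = f (x - a) + b}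
   \<union> {(Inr (a, b), Inl (x, y)) | x y a b. y = f (x - a) + b}"

definition incidence_conn where
  "incidence_conn f = (incidence_edges f)\<^sup>*"

text \<open>S(G,H;f) splits into two substructures: the incidence graph has exactly two components.\<close>
definition splits_into_two :: "('g::ab_group_add \<Rightarrow> 'h::ab_group_add) \<Rightarrow> bool" where
  "splits_into_two f \<longleftrightarrow> card (UNIV // incidence_conn f) = 2"

definition P1 :: "('g::ab_group_add \<Rightarrow> 'h::ab_group_add) \<Rightarrow> 'g \<Rightarrow> 'h set" where
  "P1 f a = {b. (Inr (0, 0), Inr (a, b)) \<in> incidence_conn f}"

definition add_subgroup :: "'g::ab_group_add set \<Rightarrow> bool" where
  "add_subgroup A \<longleftrightarrow> 0 \<in> A \<and> (\<forall>x\<in>A. \<forall>y\<in>A. x + y \<in> A) \<and> (\<forall>x\<in>A. - x \<in> A)"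

end

theory Submission
  imports Defs
begin

text \<open>The translations (x, y) \<mapsto> (x + c, y + d), acting simultaneously on points and lines,
  are automorphisms of S(G,H;f). Hence the set K of lines (a, b) connected to L(0,0) is a subgroup
  of G \<times> H, and A = {a. (a, 0) \<in> K} is a subgroup of G. If g, h \<notin> A, then L(g,0) and L(h,0)
  both lie outside the component of L(0,0); as there are only two components they are connected,
  and translating by (-h, 0) gives g - h \<in> A. So A has at most two cosets.\<close>

fun translate_vertex ::
  "'g::ab_group_add \<Rightarrow> 'h::ab_group_add \<Rightarrow> ('g \<times> 'h) + ('g \<times> 'h) \<Rightarrow> ('g \<times> 'h) + ('g \<times> 'h)" where
  "translate_vertex c d (Inl (x, y)) = Inl (x + c, y + d)"
| "translate_vertex c d (Inr (a, b)) = Inr (a + c, b + d)"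

lemma incidence_edges_translate:
  assumes "(u, v) \<in> incidence_edges f"
  shows "(translate_vertex c d u, translate_vertex c d v) \<in> incidence_edges f"
proof -
  have "\<And>x a. f (x + c - (a + c)) = f (x - a)" by (simp add: algebra_simps)
  then show ?thesis using assms unfolding incidence_edges_def by auto
qed

lemma incidence_conn_translate:
  assumes "(u, v) \<in> incidence_conn f"
  shows "(translate_vertex c d u, translate_vertex c d v) \<in> incidence_conn f"
  using assms unfolding incidence_conn_def
proof (induction rule: rtrancl_induct)
  case (step v w)
  then show ?case by (meson incidence_edges_translate rtrancl_into_rtrancl)
qed simp

lemma equiv_incidence_conn: "equiv UNIV (incidence_conn f)"
proof -
  have "sym (incidence_edges f)" unfolding sym_def incidence_edges_def by blast
  then show ?thesis
    unfolding equiv_def incidence_conn_def by (simp add: refl_rtrancl sym_rtrancl trans_rtrancl)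
qed

lemma equiv_two_classes_pigeonhole:
  assumes "equiv X r" "card (X // r) = 2" "u \<in> X" "v \<in> X" "w \<in> X"
  shows "(u, v) \<in> r \<or> (u, w) \<in> r \<or> (v, w) \<in> r"
proof (rule ccontr)
  assume unrelated: "\<not> ?thesis"
  have distinct: "r `` {u} \<noteq> r `` {v}" "r `` {u} \<noteq> r `` {w}" "r `` {v} \<noteq> r `` {w}"
    using unrelated equiv_class_eq_iff[OF assms(1)] assms(3-5) by blast+
  have "{r `` {u}, r `` {v}, r `` {w}} \<subseteq> X // r"
    using assms(3-5) by (auto intro: quotientI)
  moreover have "finite (X // r)"
    using assms(2) card.infinite by force
  ultimately have "card {r `` {u}, r `` {v}, r `` {w}} \<le> 2"
    using assms(2) card_mono by metis
  then show False
    using distinct by simp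
qed

lemma add_subgroup_at_most_two_cosets:
  fixes A :: "'g::{ab_group_add,finite} set"
  assumes "add_subgroup A"
    and two_cosets: "\<And>g h. g \<notin> A \<Longrightarrow> h \<notin> A \<Longrightarrow> g - h \<in> A"
  shows "2 * card A = card (UNIV :: 'g set) \<or> A = UNIV"
proof (cases "A = UNIV")
  case False
  then obtain h where h: "h \<notin> A" by auto
  let ?coset = "(\<lambda>x. x + h) ` A"
  have "UNIV = A \<union> ?coset"
  proof (intro set_eqI iffI)
    fix g :: 'g
    show "g \<in> A \<union> ?coset"
      using two_cosets[OF _ h, of g] by (cases "g \<in> A") (auto intro: image_eqI[of _ _ "g - h"])
  qed simp
  moreover have "A \<inter> ?coset = {}"
  proof -
    have "x + h \<notin> A" if "x \<in> A" for x
      using that h assms(1) unfolding add_subgroup_def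
      by (metis add.commute add_diff_cancel add_uminus_conv_diff)
    then show ?thesis by auto
  qed
  moreover have "card ?coset = card A"
    by (rule card_image) (simp add: inj_on_def)
  ultimately have "card (UNIV :: 'g set) = card A + card A"
    by (metis card_Un_disjoint finite)
  then show ?thesis by simp
qed simp

definition line_component :: "('g::ab_group_add \<Rightarrow> 'h::ab_group_add) \<Rightarrow> ('g \<times> 'h) set" where
  "line_component f = {(a, b). (Inr (0, 0), Inr (a, b)) \<in> incidence_conn f}"

lemma line_component_zero: "(0, 0) \<in> line_component f"
  unfolding line_component_def incidence_conn_def by simp

lemma line_component_add:
  assumes "(a, b) \<in> line_component f" "(a', b') \<in> line_component f"
  shows "(a + a', b + b') \<in> line_component f"
proof -
  have "(Inr (a, b), Inr (a + a', b + b')) \<in> incidence_conn f"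
    using incidence_conn_translate[of "Inr (0, 0)" "Inr (a', b')" f a b] assms(2)
    by (simp add: line_component_def add.commute)
  then show ?thesis
    using assms(1) equiv_incidence_conn[of f]
    unfolding line_component_def equiv_def trans_def by blast
qed

lemma line_component_uminus:
  assumes "(a, b) \<in> line_component f"
  shows "(- a, - b) \<in> line_component f"
proof -
  have "(Inr (- a, - b), Inr (0, 0)) \<in> incidence_conn f"
    using incidence_conn_translate[of "Inr (0, 0)" "Inr (a, b)" f "- a" "- b"] assms
    by (simp add: line_component_def)
  then show ?thesis
    using equiv_incidence_conn[of f] unfolding line_component_def equiv_def sym_def by blast
qed

lemma line_component_diff:
  assumes "(a, b) \<in> line_component f" "(a', b') \<in> line_component f"
  shows "(a - a', b - b') \<in> line_component f"
  using line_component_add[OF assms(1) line_component_uminus[OF assms(2)]] by simp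

lemma P1_eq_P1_zero_iff: "P1 f 0 = P1 f a \<longleftrightarrow> (a, 0) \<in> line_component f"
proof
  assume "P1 f 0 = P1 f a"
  then show "(a, 0) \<in> line_component f"
    using line_component_zero[of f] by (auto simp: P1_def line_component_def)
next
  assume a: "(a, 0) \<in> line_component f"
  have "(0, b) \<in> line_component f \<longleftrightarrow> (a, b) \<in> line_component f" for b
    using line_component_add[OF a, of 0 b] line_component_diff[OF _ a, of a b] by auto
  then show "P1 f 0 = P1 f a"
    by (auto simp: P1_def line_component_def)
qed

lemma add_subgroup_P1_stabilizer: "add_subgroup {a. P1 f 0 = P1 f a}"
  unfolding add_subgroup_def P1_eq_P1_zero_iff
  using line_component_zero line_component_add line_component_uminus by fastforce

lemma P1_stabilizer_two_cosets:
  assumes "splits_into_two f"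
    and "P1 f 0 \<noteq> P1 f g" "P1 f 0 \<noteq> P1 f h"
  shows "P1 f 0 = P1 f (g - h)"
proof -
  have "(Inr (h, 0), Inr (g, 0)) \<in> incidence_conn f"
    using equiv_two_classes_pigeonhole[OF equiv_incidence_conn,
        where u = "Inr (0, 0)" and v = "Inr (h, 0)" and w = "Inr (g, 0)"] assms
    by (auto simp: splits_into_two_def P1_eq_P1_zero_iff line_component_def)
  from incidence_conn_translate[OF this, of "- h" 0] show ?thesis
    by (simp add: P1_eq_P1_zero_iff line_component_def)
qed

theorem theorem3:
  fixes f :: "'g::{ab_group_add,finite} \<Rightarrow> 'h::{ab_group_add,finite}"
  assumes "(card (UNIV :: 'g set)) = (card (UNIV :: 'h set))"
    and "even (card (UNIV :: 'g set))"
    and "(card (UNIV :: 'g set)) > 2"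
    and "semi_planar f"
    and "splits_into_two f"
  shows "(add_subgroup {a. P1 f 0 = P1 f a} \<and> 2 * card {a. P1 f 0 = P1 f a} = (card (UNIV :: 'g set)))
         \<or> {a. P1 f 0 = P1 f a} = UNIV"
  using add_subgroup_at_most_two_cosets[OF add_subgroup_P1_stabilizer]
    P1_stabilizer_two_cosets[OF assms(5)] add_subgroup_P1_stabilizer
  by blast

end
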